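(* Let $b>0$, $\Delta>0$, $\sigma_\theta^2>0$ be real numbers and define $$E_1(a)=\begin{cases}\dfrac{b-\sqrt{\tfrac{b^2-\Delta a+\sqrt{(b^2-\Delta a)^2+\sigma_\theta^2a^2}}{2}}}{a}, & a\neq0,\\[1ex] \dfrac{\Delta}{2b}, & a=0,\end{cases}$$ and $\bar a=\frac{4b^2\Delta}{\sigma_\theta^2}$. Then $E_1(a)>0$ if and only if $a<\bar a$, and on the region $a<\bar a$ the function $E_1$ has a unique maximizer $a^\dagger$. Moreover, $a^\dagger>0$ iff $\sigma_\theta^2<\Delta^2$, $a^\dagger=0$ iff $\sigma_\theta^2=\Delta^2$, and $a^\dagger<0$ iff $\sigma_\theta^2>\Delta^2$. Finally, $a^\dagger<\frac{2b^2\Delta}{\Delta^2+\sigma_\theta^2}<\bar a$.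
   Context: $E_1(a)$ is the expected effort in the affine symmetric Bayesian equilibrium of the cubic contest, where $\Delta=c-E[\theta]$ and $\sigma_\theta^2$ is the type variance. *)

theory Defs
  imports Complex_Main
begin

text \<open>Expected effort E_1(a); parameters b, Delta = c - E[theta], and s = sigma_theta^2 (type variance).\<close>
definition E1 :: "real \<Rightarrow> real \<Rightarrow> real \<Rightarrow> real \<Rightarrow> real" where
  "E1 b \<Delta> s a =
     (if a \<noteq> 0 then
        (b - sqrt ((b\<^sup>2 - \<Delta> * a + sqrt ((b\<^sup>2 - \<Delta> * a)\<^sup>2 + s * a\<^sup>2)) / 2)) / a
      else \<Delta> / (2 * b))"

definition abar :: "real \<Rightarrow> real \<Rightarrow> real \<Rightarrow> real" where
  "abar b \<Delta> s = 4 * b\<^sup>2 * \<Delta> / s"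

end

theory Submission
  imports Defs
begin

(* Clearing the nested square roots shows that, for a level e, the sign of E1(a) - e on the region
   b - a e > 0 is the sign of the cubic 4 (b - a e)^2 (Delta - 2 b e + a e^2) - s a, whose leading
   coefficient 4 e^4 is positive and which is negative at a = b / e; where b - a e <= 0, E1(a) < e
   directly.  A cubic with positive leading coefficient cannot be >= 0, <= 0, >= 0, <= 0 at four
   increasing points, so E1 is strictly quasiconcave on positive levels: two maximizers would be beaten
   by their midpoint, and whenever E1 p < E1 q every maximizer lies on the side of p where q is.
   At the level E1(0) = Delta / (2 b) the cubic factors explicitly.  This shows that E1 beats E1(0) at
   b^2 (Delta - sqrt s) / Delta^2 unless s = Delta^2 (and then 0 is the maximizer), that E1 is below
   E1(0) at 2 b^2 Delta / (Delta^2 + s), and that E1 stays below E1(0) far to the left, so a maximizer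
   exists by continuity. *)

definition E1_rad :: "real \<Rightarrow> real \<Rightarrow> real \<Rightarrow> real \<Rightarrow> real" where
  "E1_rad b \<Delta> s a = sqrt ((b\<^sup>2 - \<Delta> * a)\<^sup>2 + s * a\<^sup>2)"

definition E1_root :: "real \<Rightarrow> real \<Rightarrow> real \<Rightarrow> real \<Rightarrow> real" where
  "E1_root b \<Delta> s a = sqrt ((b\<^sup>2 - \<Delta> * a + E1_rad b \<Delta> s a) / 2)"

lemma E1_eq_root: "a \<noteq> 0 \<Longrightarrow> E1 b \<Delta> s a = (b - E1_root b \<Delta> s a) / a"
  by (simp add: E1_def E1_root_def E1_rad_def)

lemma E1_at_0: "E1 b \<Delta> s 0 = \<Delta> / (2 * b)"
  by (simp add: E1_def)

lemma E1_rad_sq: "s \<ge> 0 \<Longrightarrow> (E1_rad b \<Delta> s a)\<^sup>2 = (b\<^sup>2 - \<Delta> * a)\<^sup>2 + s * a\<^sup>2"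
  by (simp add: E1_rad_def)

lemma E1_rad_ge_abs: "s \<ge> 0 \<Longrightarrow> \<bar>b\<^sup>2 - \<Delta> * a\<bar> \<le> E1_rad b \<Delta> s a"
  unfolding E1_rad_def by (metis real_sqrt_abs real_sqrt_le_mono le_add_same_cancel1 zero_le_mult_iff zero_le_power2)

lemma E1_rad_gt_abs: "s > 0 \<Longrightarrow> a \<noteq> 0 \<Longrightarrow> \<bar>b\<^sup>2 - \<Delta> * a\<bar> < E1_rad b \<Delta> s a"
  unfolding E1_rad_def by (metis real_sqrt_abs real_sqrt_less_mono less_add_same_cancel1 mult_pos_pos zero_less_power2)

lemma E1_rad_at_0: "E1_rad b \<Delta> s 0 = b\<^sup>2"
  using real_sqrt_abs[of "b\<^sup>2"] by (simp add: E1_rad_def)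

lemma E1_root_sq: "s \<ge> 0 \<Longrightarrow> 2 * (E1_root b \<Delta> s a)\<^sup>2 = b\<^sup>2 - \<Delta> * a + E1_rad b \<Delta> s a"
  using E1_rad_ge_abs[of s b \<Delta> a] by (simp add: E1_root_def)

lemma E1_root_pos:
  assumes "s > 0" "b > 0"
  shows "E1_root b \<Delta> s a > 0"
proof (cases "a = 0")
  case True
  then show ?thesis using assms by (simp add: E1_root_def E1_rad_at_0)
next
  case False
  then show ?thesis using E1_rad_gt_abs[OF assms(1) False, of b \<Delta>] by (simp add: E1_root_def)
qed

definition E1_level_cubic :: "real \<Rightarrow> real \<Rightarrow> real \<Rightarrow> real \<Rightarrow> real \<Rightarrow> real" where
  "E1_level_cubic b \<Delta> s e a = 4 * (b - a * e)\<^sup>2 * (\<Delta> - 2 * b * e + a * e\<^sup>2) - s * a"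

definition E1_level_denom :: "real \<Rightarrow> real \<Rightarrow> real \<Rightarrow> real \<Rightarrow> real \<Rightarrow> real" where
  "E1_level_denom b \<Delta> s e a =
     2 * (b - a * e + E1_root b \<Delta> s a) * (2 * (b - a * e)\<^sup>2 - (b\<^sup>2 - \<Delta> * a) + E1_rad b \<Delta> s a)"

lemma E1_level_denom_pos:
  assumes "s > 0" "b > 0" "a * e < b"
  shows "E1_level_denom b \<Delta> s e a > 0"
proof -
  have "b\<^sup>2 - \<Delta> * a \<le> E1_rad b \<Delta> s a"
    using E1_rad_ge_abs[of s b \<Delta> a] assms(1) by linarith
  moreover have "(b - a * e)\<^sup>2 > 0" using assms(3) by simp
  ultimately have "2 * (b - a * e)\<^sup>2 - (b\<^sup>2 - \<Delta> * a) + E1_rad b \<Delta> s a > 0" by linarith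
  moreover have "b - a * e + E1_root b \<Delta> s a > 0" using E1_root_pos[OF assms(1,2), of \<Delta> a] assms(3) by linarith
  ultimately show ?thesis unfolding E1_level_denom_def by simp
qed

lemma E1_minus_level:
  assumes "s > 0" "b > 0" "a * e < b"
  shows "E1 b \<Delta> s a - e = E1_level_cubic b \<Delta> s e a / E1_level_denom b \<Delta> s e a"
proof (cases "a = 0")
  case True
  then show ?thesis using assms
    by (simp add: E1_def E1_level_cubic_def E1_level_denom_def E1_root_def E1_rad_at_0
        field_simps power2_eq_square)
next
  case False
  define c where "c = b - a * e"
  define u where "u = b\<^sup>2 - \<Delta> * a"
  define R where "R = E1_rad b \<Delta> s a"
  define Y where "Y = E1_root b \<Delta> s a"
  have R2: "R\<^sup>2 = u\<^sup>2 + s * a\<^sup>2" using E1_rad_sq assms(1) unfolding R_def u_def by simp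
  have Y2: "2 * Y\<^sup>2 = u + R" using E1_root_sq assms(1) unfolding Y_def u_def R_def by simp
  \<comment> \<open>Rationalize c - Y with c + Y, then 2 c^2 - u - R with 2 c^2 - u + R.\<close>
  have "(c - Y) * E1_level_denom b \<Delta> s e a = (2 * c\<^sup>2 - 2 * Y\<^sup>2) * (2 * c\<^sup>2 - u + R)"
    unfolding E1_level_denom_def c_def Y_def u_def R_def by (simp add: power2_eq_square algebra_simps)
  also have "\<dots> = (2 * c\<^sup>2 - u)\<^sup>2 - R\<^sup>2"
    unfolding Y2 by (simp add: power2_eq_square algebra_simps)
  also have "\<dots> = a * E1_level_cubic b \<Delta> s e a"
    unfolding R2 E1_level_cubic_def c_def u_def by (simp add: power2_eq_square algebra_simps)
  finally have "(c - Y) / a = E1_level_cubic b \<Delta> s e a / E1_level_denom b \<Delta> s e a"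
    using E1_level_denom_pos[OF assms, of \<Delta>] False by (simp add: field_simps)
  moreover have "E1 b \<Delta> s a - e = (c - Y) / a"
    using False unfolding E1_eq_root[OF False] c_def Y_def by (simp add: field_simps)
  ultimately show ?thesis by simp
qed

lemma sgn_E1_minus_level:
  assumes "s > 0" "b > 0" "a * e < b"
  shows "sgn (E1 b \<Delta> s a - e) = sgn (E1_level_cubic b \<Delta> s e a)"
  using E1_minus_level[OF assms, of \<Delta>] E1_level_denom_pos[OF assms, of \<Delta>] by simp

lemma E1_less_level:
  assumes "s > 0" "b > 0" "e > 0" "b \<le> a * e"
  shows "E1 b \<Delta> s a < e"
proof -
  have "a > 0" using assms(2-4) by (smt (verit) mult_nonpos_nonneg)
  moreover have "b - E1_root b \<Delta> s a < a * e" using E1_root_pos[OF assms(1,2), of \<Delta> a] assms(4) by linarith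
  ultimately show ?thesis by (simp add: E1_eq_root divide_less_eq mult.commute)
qed

lemma E1_pos_iff:
  assumes "s > 0" "b > 0"
  shows "E1 b \<Delta> s a > 0 \<longleftrightarrow> a < abar b \<Delta> s"
proof -
  have "sgn (E1 b \<Delta> s a) = sgn (4 * b\<^sup>2 * \<Delta> - s * a)"
    using sgn_E1_minus_level[OF assms, of a 0] assms(2) by (simp add: E1_level_cubic_def)
  then have "E1 b \<Delta> s a > 0 \<longleftrightarrow> s * a < 4 * b\<^sup>2 * \<Delta>"
    by (metis sgn_greater diff_gt_0_iff_gt)
  also have "\<dots> \<longleftrightarrow> a < abar b \<Delta> s"
    using assms(1) by (simp add: abar_def pos_less_divide_eq mult.commute)
  finally show ?thesis .
qed

lemma cubic_no_alternating_signs: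
  fixes k3 k2 k1 k0 x y z w :: real
  defines "p \<equiv> \<lambda>t. k3 * t ^ 3 + k2 * t\<^sup>2 + k1 * t + k0"
  assumes "k3 > 0" and "x < y" "y < z" "z < w"
    and "p x \<ge> 0" "p y \<le> 0" "p z \<ge> 0" "p w \<le> 0"
  shows False
proof -
  \<comment> \<open>The third divided difference of a cubic is its leading coefficient.\<close>
  have "k3 * ((y - x) * (z - x) * (w - x) * (z - y) * (w - y) * (w - z)) =
      - p x * ((z - y) * (w - y) * (w - z)) + p y * ((z - x) * (w - x) * (w - z))
      - p z * ((y - x) * (w - x) * (w - y)) + p w * ((y - x) * (z - x) * (z - y))"
    unfolding p_def by (simp add: algebra_simps power2_eq_square power3_eq_cube)
  moreover have "k3 * ((y - x) * (z - x) * (w - x) * (z - y) * (w - y) * (w - z)) > 0"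
    using assms(2-5) by simp
  moreover have "p x * ((z - y) * (w - y) * (w - z)) \<ge> 0" "p y * ((z - x) * (w - x) * (w - z)) \<le> 0"
    "p z * ((y - x) * (w - x) * (w - y)) \<ge> 0" "p w * ((y - x) * (z - x) * (z - y)) \<le> 0"
    using assms(3-9) by (simp_all add: mult_nonneg_nonneg mult_nonpos_nonneg)
  ultimately show False by linarith
qed

lemma E1_level_cubic_no_alternating_signs:
  assumes "e \<noteq> 0" "x < y" "y < z" "z < w"
    and "E1_level_cubic b \<Delta> s e x \<ge> 0" "E1_level_cubic b \<Delta> s e y \<le> 0"
    and "E1_level_cubic b \<Delta> s e z \<ge> 0" "E1_level_cubic b \<Delta> s e w \<le> 0"
  shows False
proof -
  have "E1_level_cubic b \<Delta> s e t = (4 * e ^ 4) * t ^ 3 + (4 * e\<^sup>2 * (\<Delta> - 4 * b * e)) * t\<^sup>2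
      + (4 * b * e * (5 * b * e - 2 * \<Delta>) - s) * t + 4 * b\<^sup>2 * (\<Delta> - 2 * b * e)" for t
    unfolding E1_level_cubic_def by (simp add: algebra_simps power2_eq_square power3_eq_cube power4_eq_xxxx)
  then show False
    using cubic_no_alternating_signs[of "4 * e ^ 4" x y z w] assms by simp
qed

lemma E1_strictly_quasiconcave:
  assumes s: "s > 0" and b: "b > 0" and e: "e > 0" and "x < y" "y < z"
    and x_ge: "e \<le> E1 b \<Delta> s x" and z_ge: "e \<le> E1 b \<Delta> s z"
  shows "e < E1 b \<Delta> s y"
proof (rule ccontr)
  assume y_le: "\<not> e < E1 b \<Delta> s y"
  have z_lt: "z * e < b" using E1_less_level[OF s b e, of z \<Delta>] z_ge by linarith
  have x_lt: "x * e < b" and y_lt: "y * e < b" using z_lt e \<open>x < y\<close> \<open>y < z\<close> by (smt (verit) mult_strict_right_mono)+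
  define w where "w = b / e"
  have "z < w" using z_lt e unfolding w_def by (simp add: pos_less_divide_eq)
  moreover have "E1_level_cubic b \<Delta> s e w \<le> 0"
    using s b e unfolding w_def E1_level_cubic_def by simp
  moreover have "E1_level_cubic b \<Delta> s e x \<ge> 0" "E1_level_cubic b \<Delta> s e z \<ge> 0"
    "E1_level_cubic b \<Delta> s e y \<le> 0"
    using sgn_E1_minus_level[OF s b x_lt] sgn_E1_minus_level[OF s b z_lt] sgn_E1_minus_level[OF s b y_lt]
      x_ge z_ge y_le by (metis sgn_less sgn_greater diff_ge_0_iff_ge diff_gt_0_iff_gt not_less)+
  ultimately show False
    using E1_level_cubic_no_alternating_signs[of e x y z w b \<Delta> s] \<open>x < y\<close> \<open>y < z\<close> e by auto
qed

lemma E1_dominating_right_of: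
  assumes "s > 0" "b > 0" "p < q" "0 < E1 b \<Delta> s q" "E1 b \<Delta> s p < E1 b \<Delta> s q"
    and "E1 b \<Delta> s q \<le> E1 b \<Delta> s m"
  shows "p < m"
proof (rule ccontr)
  assume "\<not> p < m"
  then consider "m = p" | "m < p" by linarith
  then show False
    using E1_strictly_quasiconcave[OF assms(1,2,4), of m p q \<Delta>] assms(3,5,6) by cases auto
qed

lemma E1_dominating_left_of:
  assumes "s > 0" "b > 0" "q < p" "0 < E1 b \<Delta> s q" "E1 b \<Delta> s p < E1 b \<Delta> s q"
    and "E1 b \<Delta> s q \<le> E1 b \<Delta> s m"
  shows "m < p"
proof (rule ccontr)
  assume "\<not> m < p"
  then consider "m = p" | "p < m" by linarith
  then show False
    using E1_strictly_quasiconcave[OF assms(1,2,4), of q p m \<Delta>] assms(3,5,6) by cases auto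
qed

lemma sgn_E1_minus_E1_0:
  assumes s: "s > 0" and b: "b > 0" and "a * \<Delta> < 2 * b\<^sup>2"
  shows "sgn (E1 b \<Delta> s a - E1 b \<Delta> s 0) = sgn (a * ((\<Delta> - a * \<Delta>\<^sup>2 / (2 * b\<^sup>2))\<^sup>2 - s))"
proof -
  define e0 where "e0 = \<Delta> / (2 * b)"
  \<comment> \<open>At this level the factor \<Delta> - 2 b e of the level cubic vanishes.\<close>
  have "a * e0 < b" using assms(3) b unfolding e0_def by (simp add: field_simps power2_eq_square)
  moreover have "E1_level_cubic b \<Delta> s e0 a = a * ((\<Delta> - a * \<Delta>\<^sup>2 / (2 * b\<^sup>2))\<^sup>2 - s)"
    using b unfolding E1_level_cubic_def e0_def by (simp add: field_simps power2_eq_square)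
  ultimately show ?thesis using sgn_E1_minus_level[OF s b] unfolding E1_at_0 e0_def by metis
qed

lemma E1_le_E1_0_far_left:
  assumes s: "s > 0" and b: "b > 0" and \<Delta>: "\<Delta> > 0" and a: "a \<le> - 2 * b\<^sup>2 * sqrt s / \<Delta>\<^sup>2"
  shows "E1 b \<Delta> s a \<le> E1 b \<Delta> s 0"
proof -
  have "- 2 * b\<^sup>2 * sqrt s / \<Delta>\<^sup>2 < 0" using s b \<Delta> by (simp add: divide_neg_pos)
  then have "a < 0" using a by linarith
  then have "a * \<Delta> < 2 * b\<^sup>2" using b \<Delta> by (smt (verit) mult_neg_pos zero_less_power)
  have "2 * b\<^sup>2 * sqrt s \<le> - a * \<Delta>\<^sup>2" using mult_right_mono[OF a, of "\<Delta>\<^sup>2"] \<Delta> by simp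
  then have "sqrt s \<le> - a * \<Delta>\<^sup>2 / (2 * b\<^sup>2)" using b by (subst pos_le_divide_eq) (auto simp: mult.commute)
  then have "sqrt s < \<Delta> - a * \<Delta>\<^sup>2 / (2 * b\<^sup>2)" using \<Delta> by linarith
  then have "s < (\<Delta> - a * \<Delta>\<^sup>2 / (2 * b\<^sup>2))\<^sup>2"
    using s real_sqrt_pow2[of s] power_strict_mono[of "sqrt s" _ 2] by force
  then have "a * ((\<Delta> - a * \<Delta>\<^sup>2 / (2 * b\<^sup>2))\<^sup>2 - s) < 0" using \<open>a < 0\<close> by (simp add: mult_neg_pos)
  then show ?thesis using sgn_E1_minus_E1_0[OF s b \<open>a * \<Delta> < 2 * b\<^sup>2\<close>] by (simp add: sgn_1_neg)
qed

lemma E1_0_less_E1_at: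
  assumes s: "s > 0" and b: "b > 0" and \<Delta>: "\<Delta> > 0" and ne: "sqrt s \<noteq> \<Delta>"
  shows "E1 b \<Delta> s 0 < E1 b \<Delta> s (b\<^sup>2 * (\<Delta> - sqrt s) / \<Delta>\<^sup>2)"
proof -
  define \<sigma> where "\<sigma> = sqrt s"
  define a where "a = b\<^sup>2 * (\<Delta> - \<sigma>) / \<Delta>\<^sup>2"
  have \<sigma>: "\<sigma> \<ge> 0" "s = \<sigma>\<^sup>2" using s unfolding \<sigma>_def by simp_all
  have "a * \<Delta> = b\<^sup>2 - b\<^sup>2 * \<sigma> / \<Delta>" using \<Delta> unfolding a_def by (simp add: field_simps power2_eq_square)
  moreover have "b\<^sup>2 * \<sigma> / \<Delta> \<ge> 0" using \<sigma> \<Delta> by simp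
  moreover have "b\<^sup>2 > 0" using b by simp
  ultimately have a\<Delta>: "a * \<Delta> < 2 * b\<^sup>2" by (smt (verit))
  have "a * ((\<Delta> - a * \<Delta>\<^sup>2 / (2 * b\<^sup>2))\<^sup>2 - s) = b\<^sup>2 * (\<Delta> - \<sigma>)\<^sup>2 * (\<Delta> + 3 * \<sigma>) / (4 * \<Delta>\<^sup>2)"
    using b \<Delta> unfolding a_def \<sigma>(2) by (simp add: field_simps power2_eq_square)
  also have "\<dots> > 0"
  proof -
    have "(\<Delta> - \<sigma>)\<^sup>2 > 0" using ne unfolding \<sigma>_def by simp
    moreover have "\<Delta> + 3 * \<sigma> > 0" using \<Delta> \<sigma>(1) by simp
    ultimately show ?thesis using b \<Delta> by simp
  qed
  finally have "sgn (E1 b \<Delta> s a - E1 b \<Delta> s 0) = 1" using sgn_E1_minus_E1_0[OF s b a\<Delta>] by simp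
  then show ?thesis unfolding a_def \<sigma>_def by (simp add: sgn_1_pos)
qed

lemma E1_le_E1_0_if_variance_eq:
  assumes s: "s > 0" and b: "b > 0" and \<Delta>: "\<Delta> > 0" and eq: "s = \<Delta>\<^sup>2"
  shows "E1 b \<Delta> s a \<le> E1 b \<Delta> s 0"
proof (cases "a * \<Delta> < 2 * b\<^sup>2")
  case True
  define t where "t = a * \<Delta> / (2 * b\<^sup>2)"
  have t: "t < 1" using True b unfolding t_def by simp
  have "a * ((\<Delta> - a * \<Delta>\<^sup>2 / (2 * b\<^sup>2))\<^sup>2 - s) = 2 * b\<^sup>2 * \<Delta> * t\<^sup>2 * (t - 2)"
    using b \<Delta> unfolding eq t_def by (simp add: field_simps power2_eq_square)
  also have "\<dots> \<le> 0" using t b \<Delta> by (simp add: mult_nonneg_nonpos)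
  finally show ?thesis
    using sgn_E1_minus_E1_0[OF s b True] by (metis sgn_greater diff_gt_0_iff_gt not_le)
next
  case False
  then have "b \<le> a * (\<Delta> / (2 * b))" using b by (simp add: field_simps power2_eq_square)
  then show ?thesis using E1_less_level[OF s b] b \<Delta> unfolding E1_at_0 by (simp add: less_imp_le)
qed

lemma E1_less_E1_0_at:
  assumes s: "s > 0" and b: "b > 0" and \<Delta>: "\<Delta> > 0"
  shows "E1 b \<Delta> s (2 * b\<^sup>2 * \<Delta> / (\<Delta>\<^sup>2 + s)) < E1 b \<Delta> s 0"
proof -
  define a where "a = 2 * b\<^sup>2 * \<Delta> / (\<Delta>\<^sup>2 + s)"
  have d: "\<Delta>\<^sup>2 + s > 0" using s by (simp add: add_nonneg_pos)
  have a: "a > 0" using b \<Delta> d unfolding a_def by simp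
  have "a * \<Delta> = 2 * b\<^sup>2 - 2 * b\<^sup>2 * s / (\<Delta>\<^sup>2 + s)" using d unfolding a_def by (simp add: field_simps power2_eq_square)
  moreover have "2 * b\<^sup>2 * s / (\<Delta>\<^sup>2 + s) > 0" using b s d by simp
  ultimately have a\<Delta>: "a * \<Delta> < 2 * b\<^sup>2" by simp
  have "a * \<Delta>\<^sup>2 / (2 * b\<^sup>2) = \<Delta> * \<Delta>\<^sup>2 / (\<Delta>\<^sup>2 + s)"
    using b unfolding a_def by simp
  then have "\<Delta> - a * \<Delta>\<^sup>2 / (2 * b\<^sup>2) = \<Delta> * s / (\<Delta>\<^sup>2 + s)"
    using d by (simp add: field_simps)
  then have "(\<Delta> - a * \<Delta>\<^sup>2 / (2 * b\<^sup>2))\<^sup>2 - s = (\<Delta> * s / (\<Delta>\<^sup>2 + s))\<^sup>2 - s"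
    by simp
  also have "\<dots> = - s * (\<Delta> ^ 4 + \<Delta>\<^sup>2 * s + s\<^sup>2) / (\<Delta>\<^sup>2 + s)\<^sup>2"
    using d by (simp add: power_divide divide_simps) (simp add: power2_eq_square power4_eq_xxxx algebra_simps)
  also have "\<dots> < 0"
  proof -
    have "\<Delta> ^ 4 + \<Delta>\<^sup>2 * s + s\<^sup>2 > 0" using s by (intro add_nonneg_pos add_nonneg_nonneg) auto
    then show ?thesis using s d by (simp add: divide_neg_pos)
  qed
  finally have "a * ((\<Delta> - a * \<Delta>\<^sup>2 / (2 * b\<^sup>2))\<^sup>2 - s) < 0" using a by (simp add: mult_pos_neg)
  then have "sgn (E1 b \<Delta> s a - E1 b \<Delta> s 0) = - 1" using sgn_E1_minus_E1_0[OF s b a\<Delta>] by simp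
  then show ?thesis unfolding a_def by (simp add: sgn_1_neg)
qed

lemma E1_eq_quotient:
  assumes "s > 0" "b > 0"
  shows "E1 b \<Delta> s a = (4 * b\<^sup>2 * \<Delta> - s * a) / E1_level_denom b \<Delta> s 0 a"
  using E1_minus_level[OF assms, of a 0 \<Delta>] assms(2) by (simp add: E1_level_cubic_def)

lemma continuous_on_E1:
  assumes "s > 0" "b > 0"
  shows "continuous_on A (E1 b \<Delta> s)"
proof -
  have "continuous_on A (E1_level_denom b \<Delta> s 0)"
    unfolding E1_level_denom_def E1_root_def E1_rad_def by (intro continuous_intros) auto
  moreover have "E1_level_denom b \<Delta> s 0 a \<noteq> 0" for a
    using E1_level_denom_pos[OF assms, of a 0 \<Delta>] assms(2) by simp
  ultimately have "continuous_on A (\<lambda>a. (4 * b\<^sup>2 * \<Delta> - s * a) / E1_level_denom b \<Delta> s 0 a)"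
    by (intro continuous_on_divide continuous_intros) auto
  moreover have "E1 b \<Delta> s = (\<lambda>a. (4 * b\<^sup>2 * \<Delta> - s * a) / E1_level_denom b \<Delta> s 0 a)"
    using E1_eq_quotient[OF assms] by blast
  ultimately show ?thesis by simp
qed

lemma E1_arg_max_exists:
  assumes s: "s > 0" and b: "b > 0" and \<Delta>: "\<Delta> > 0"
  shows "\<exists>m. is_arg_max (E1 b \<Delta> s) (\<lambda>a. a < abar b \<Delta> s) m"
proof -
  define L where "L = - 2 * b\<^sup>2 * sqrt s / \<Delta>\<^sup>2"
  have "L \<le> 0" "0 < abar b \<Delta> s" using s b \<Delta> unfolding L_def abar_def by (simp_all add: divide_nonpos_pos)
  then have "0 \<in> {L..abar b \<Delta> s}" by simp
  moreover obtain m where max: "\<forall>a \<in> {L..abar b \<Delta> s}. E1 b \<Delta> s a \<le> E1 b \<Delta> s m"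
    using continuous_attains_sup[OF compact_Icc _ continuous_on_E1[OF s b]] \<open>0 \<in> {L..abar b \<Delta> s}\<close> by blast
  ultimately have E1_0_le: "E1 b \<Delta> s 0 \<le> E1 b \<Delta> s m" by blast
  then have "0 < E1 b \<Delta> s m" using b \<Delta> unfolding E1_at_0 by (smt (verit) divide_pos_pos)
  then have "m < abar b \<Delta> s" using E1_pos_iff[OF s b] by blast
  moreover have "E1 b \<Delta> s a \<le> E1 b \<Delta> s m" if "a < abar b \<Delta> s" for a
  proof (cases "a < L")
    case True
    then show ?thesis using E1_le_E1_0_far_left[OF s b \<Delta>, of a] E1_0_le unfolding L_def by simp
  next
    case False
    then show ?thesis using max that by simp
  qed
  ultimately show ?thesis by (auto simp: is_arg_max_linorder)
qed

lemma E1_arg_max_unique: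
  assumes s: "s > 0" and b: "b > 0" and \<Delta>: "\<Delta> > 0"
    and "is_arg_max (E1 b \<Delta> s) (\<lambda>a. a < abar b \<Delta> s) m\<^sub>1"
    and "is_arg_max (E1 b \<Delta> s) (\<lambda>a. a < abar b \<Delta> s) m\<^sub>2"
  shows "m\<^sub>1 = m\<^sub>2"
proof -
  have "\<not> x < y" if x: "is_arg_max (E1 b \<Delta> s) (\<lambda>a. a < abar b \<Delta> s) x"
    and y: "is_arg_max (E1 b \<Delta> s) (\<lambda>a. a < abar b \<Delta> s) y" for x y
  proof
    assume "x < y"
    have "0 < abar b \<Delta> s" using s b \<Delta> unfolding abar_def by simp
    then have "E1 b \<Delta> s 0 \<le> E1 b \<Delta> s x" using x by (simp add: is_arg_max_linorder)
    then have pos: "0 < E1 b \<Delta> s x" using b \<Delta> unfolding E1_at_0 by (smt (verit) divide_pos_pos)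
    have mid: "x < (x + y) / 2" "(x + y) / 2 < y" using \<open>x < y\<close> by simp_all
    have "E1 b \<Delta> s y = E1 b \<Delta> s x" using x y by (simp add: is_arg_max_linorder order_antisym)
    then have "E1 b \<Delta> s x < E1 b \<Delta> s ((x + y) / 2)"
      using E1_strictly_quasiconcave[OF s b pos mid] by simp
    moreover have "(x + y) / 2 < abar b \<Delta> s" using mid y by (simp add: is_arg_max_linorder)
    ultimately show False using x unfolding is_arg_max_linorder by (meson not_le)
  qed
  then show ?thesis using assms(4,5) by (meson linorder_neqE)
qed

lemma E1_arg_max_sgn:
  assumes s: "s > 0" and b: "b > 0" and \<Delta>: "\<Delta> > 0"
    and m: "is_arg_max (E1 b \<Delta> s) (\<lambda>a. a < abar b \<Delta> s) m"
  shows "sgn m = sgn (\<Delta>\<^sup>2 - s)"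
proof -
  define a where "a = b\<^sup>2 * (\<Delta> - sqrt s) / \<Delta>\<^sup>2"
  have E1_0_pos: "0 < E1 b \<Delta> s 0" using b \<Delta> unfolding E1_at_0 by simp
  have a_better: "E1 b \<Delta> s 0 < E1 b \<Delta> s a" "0 < E1 b \<Delta> s a" "E1 b \<Delta> s a \<le> E1 b \<Delta> s m"
    if "sqrt s \<noteq> \<Delta>"
  proof -
    show gt: "E1 b \<Delta> s 0 < E1 b \<Delta> s a" using E1_0_less_E1_at[OF s b \<Delta> that] unfolding a_def .
    then show pos: "0 < E1 b \<Delta> s a" using E1_0_pos by linarith
    then have "a < abar b \<Delta> s" using E1_pos_iff[OF s b] by blast
    then show "E1 b \<Delta> s a \<le> E1 b \<Delta> s m" using m by (simp add: is_arg_max_linorder)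
  qed
  have sqrt_less_iff: "sqrt s < \<Delta> \<longleftrightarrow> s < \<Delta>\<^sup>2" "\<Delta> < sqrt s \<longleftrightarrow> \<Delta>\<^sup>2 < s"
    using real_sqrt_less_iff[of s "\<Delta>\<^sup>2"] real_sqrt_less_iff[of "\<Delta>\<^sup>2" s] \<Delta> by simp_all
  have a_sign: "sqrt s < \<Delta> \<longleftrightarrow> 0 < a" "\<Delta> < sqrt s \<longleftrightarrow> a < 0"
    using b \<Delta> unfolding a_def by (simp_all add: zero_less_divide_iff divide_less_0_iff zero_less_mult_iff mult_less_0_iff)
  consider (less) "s < \<Delta>\<^sup>2" | (equal) "s = \<Delta>\<^sup>2" | (greater) "\<Delta>\<^sup>2 < s" by linarith
  then show ?thesis
  proof cases
    case less
    then have "0 < a" "sqrt s \<noteq> \<Delta>" using sqrt_less_iff a_sign by auto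
    then have "0 < m" using E1_dominating_right_of[OF s b \<open>0 < a\<close>] a_better by blast
    then show ?thesis using less by simp
  next
    case equal
    have "0 < abar b \<Delta> s" using s b \<Delta> unfolding abar_def by simp
    then have "is_arg_max (E1 b \<Delta> s) (\<lambda>a. a < abar b \<Delta> s) 0"
      using E1_le_E1_0_if_variance_eq[OF s b \<Delta> equal] by (simp add: is_arg_max_linorder)
    then show ?thesis using E1_arg_max_unique[OF s b \<Delta> m] equal by simp
  next
    case greater
    then have "a < 0" "sqrt s \<noteq> \<Delta>" using sqrt_less_iff a_sign by auto
    then have "m < 0" using E1_dominating_left_of[OF s b \<open>a < 0\<close>] a_better by blast
    then show ?thesis using greater by simp
  qed
qed

lemma E1_arg_max_less:
  assumes s: "s > 0" and b: "b > 0" and \<Delta>: "\<Delta> > 0"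
    and m: "is_arg_max (E1 b \<Delta> s) (\<lambda>a. a < abar b \<Delta> s) m"
  shows "m < 2 * b\<^sup>2 * \<Delta> / (\<Delta>\<^sup>2 + s)"
proof (rule E1_dominating_left_of[OF s b])
  show "0 < 2 * b\<^sup>2 * \<Delta> / (\<Delta>\<^sup>2 + s)" using s b \<Delta> by (simp add: add_nonneg_pos)
  show "0 < E1 b \<Delta> s 0" using b \<Delta> unfolding E1_at_0 by simp
  show "E1 b \<Delta> s (2 * b\<^sup>2 * \<Delta> / (\<Delta>\<^sup>2 + s)) < E1 b \<Delta> s 0" using E1_less_E1_0_at[OF s b \<Delta>] .
  have "0 < abar b \<Delta> s" using s b \<Delta> unfolding abar_def by simp
  then show "E1 b \<Delta> s 0 \<le> E1 b \<Delta> s m" using m by (simp add: is_arg_max_linorder)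
qed

theorem theorem6:
  fixes b \<Delta> s :: real
  assumes "b > 0" and "\<Delta> > 0" and "s > 0"
  shows "(\<forall>a. E1 b \<Delta> s a > 0 \<longleftrightarrow> a < abar b \<Delta> s)
       \<and> (\<exists>!a\<^sub>d. a\<^sub>d < abar b \<Delta> s \<and> (\<forall>a. a < abar b \<Delta> s \<longrightarrow> E1 b \<Delta> s a \<le> E1 b \<Delta> s a\<^sub>d))
       \<and> (\<forall>a\<^sub>d. a\<^sub>d < abar b \<Delta> s \<and> (\<forall>a. a < abar b \<Delta> s \<longrightarrow> E1 b \<Delta> s a \<le> E1 b \<Delta> s a\<^sub>d) \<longrightarrow>
            (a\<^sub>d > 0 \<longleftrightarrow> s < \<Delta>\<^sup>2) \<and> (a\<^sub>d = 0 \<longleftrightarrow> s = \<Delta>\<^sup>2) \<and> (a\<^sub>d < 0 \<longleftrightarrow> s > \<Delta>\<^sup>2)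
            \<and> a\<^sub>d < 2 * b\<^sup>2 * \<Delta> / (\<Delta>\<^sup>2 + s)
            \<and> 2 * b\<^sup>2 * \<Delta> / (\<Delta>\<^sup>2 + s) < abar b \<Delta> s)"
proof -
  note b = assms(1) and \<Delta> = assms(2) and s = assms(3)
  have arg_max_iff: "is_arg_max (E1 b \<Delta> s) (\<lambda>a. a < abar b \<Delta> s) m \<longleftrightarrow>
      m < abar b \<Delta> s \<and> (\<forall>a. a < abar b \<Delta> s \<longrightarrow> E1 b \<Delta> s a \<le> E1 b \<Delta> s m)" for m
    by (simp add: is_arg_max_linorder)
  have "2 * b\<^sup>2 * \<Delta> / (\<Delta>\<^sup>2 + s) \<le> 2 * b\<^sup>2 * \<Delta> / s"
    using b \<Delta> s by (intro divide_left_mono mult_pos_pos add_nonneg_pos) auto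
  also have "\<dots> < abar b \<Delta> s"
    using b \<Delta> s unfolding abar_def by (intro divide_strict_right_mono) auto
  finally have peak_lt_abar: "2 * b\<^sup>2 * \<Delta> / (\<Delta>\<^sup>2 + s) < abar b \<Delta> s" .
  have "\<exists>!m. is_arg_max (E1 b \<Delta> s) (\<lambda>a. a < abar b \<Delta> s) m"
    using E1_arg_max_exists[OF s b \<Delta>] E1_arg_max_unique[OF s b \<Delta>] by (rule ex_ex1I)
  then have "\<exists>!a\<^sub>d. a\<^sub>d < abar b \<Delta> s \<and> (\<forall>a. a < abar b \<Delta> s \<longrightarrow> E1 b \<Delta> s a \<le> E1 b \<Delta> s a\<^sub>d)"
    unfolding arg_max_iff .
  moreover have "(a\<^sub>d > 0 \<longleftrightarrow> s < \<Delta>\<^sup>2) \<and> (a\<^sub>d = 0 \<longleftrightarrow> s = \<Delta>\<^sup>2) \<and> (a\<^sub>d < 0 \<longleftrightarrow> s > \<Delta>\<^sup>2)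
      \<and> a\<^sub>d < 2 * b\<^sup>2 * \<Delta> / (\<Delta>\<^sup>2 + s)"
    if "a\<^sub>d < abar b \<Delta> s \<and> (\<forall>a. a < abar b \<Delta> s \<longrightarrow> E1 b \<Delta> s a \<le> E1 b \<Delta> s a\<^sub>d)" for a\<^sub>d
  proof -
    have max: "is_arg_max (E1 b \<Delta> s) (\<lambda>a. a < abar b \<Delta> s) a\<^sub>d" using that unfolding arg_max_iff .
    have "sgn a\<^sub>d = sgn (\<Delta>\<^sup>2 - s)" by (rule E1_arg_max_sgn[OF s b \<Delta> max])
    then show ?thesis using E1_arg_max_less[OF s b \<Delta> max] by (auto simp: sgn_if split: if_splits)
  qed
  ultimately show ?thesis using E1_pos_iff[OF s b] peak_lt_abar by blast
qed

end
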